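(* Let $l_1,m_1,l_2,m_2,n$ be positive integers with $l_1\le m_1<l_2\le m_2$. Let $\Psi(l_1,m_1,l_2,m_2,n)$ be the number of subsets $X\subseteq[l_1,m_1]\cup[l_2,m_2]$ with $l_1\in X$, $l_2\in X$ and $\gcd(X\cup\{n\})=1$, and for an integer $k\ge 2$ let $\Psi_k(l_1,m_1,l_2,m_2,n)$ be the number of such subsets that moreover have exactly $k$ elements. Then \[ \text{(a)}\quad \Psi(l_1,m_1,l_2,m_2,n)=\sum_{d\mid \gcd(l_1,l_2,n)}\mu(d)\,2^{\lfloor m_1/d\rfloor+\lfloor m_2/d\rfloor-(l_1+l_2)/d}, \] \[ \text{(b)}\quad \Psi_k(l_1,m_1,l_2,m_2,n)=\sum_{d\mid \gcd(l_1,l_2,n)}\mu(d)\binom{\lfloor m_1/d\rfloor+\lfloor m_2/d\rfloor-(l_1+l_2)/d}{k-2}. \]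
   Context: $[l,m]=\{l,l+1,\ldots,m\}$ for positive integers $l\le m$. $\mu$ is the Möbius function, $\lfloor x\rfloor$ the floor function, and $\gcd(S)$ the greatest common divisor of a finite nonempty set $S$ of positive integers. *)

theory Defs
  imports "HOL-Computational_Algebra.Computational_Algebra"
begin

definition moebius :: "nat \<Rightarrow> int" where
  "moebius d = (if squarefree d then (-1) ^ card (prime_factors d) else 0)"

definition Psi_sets :: "nat \<Rightarrow> nat \<Rightarrow> nat \<Rightarrow> nat \<Rightarrow> nat \<Rightarrow> nat set set" where
  "Psi_sets l1 m1 l2 m2 n =
     {X. X \<subseteq> {l1..m1} \<union> {l2..m2} \<and> l1 \<in> X \<and> l2 \<in> X \<and> Gcd (X \<union> {n}) = 1}"

definition Psi :: "nat \<Rightarrow> nat \<Rightarrow> nat \<Rightarrow> nat \<Rightarrow> nat \<Rightarrow> nat" where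
  "Psi l1 m1 l2 m2 n = card (Psi_sets l1 m1 l2 m2 n)"

definition Psi_k :: "nat \<Rightarrow> nat \<Rightarrow> nat \<Rightarrow> nat \<Rightarrow> nat \<Rightarrow> nat \<Rightarrow> nat" where
  "Psi_k k l1 m1 l2 m2 n = card {X \<in> Psi_sets l1 m1 l2 m2 n. card X = k}"

end

theory Submission
  imports Defs
begin

(*
  The count of the sets X in Psi_sets is a Moebius inversion.  Write A for the family of
  sets X \<subseteq> [l1,m1] \<union> [l2,m2] containing l1 and l2, and G X = gcd(X \<union> {n}); every G X divides
  g = gcd(l1, l2, n).  Since \<Sum>_{d | G X} \<mu>(d) is 1 if G X = 1 and 0 otherwise, the number of
  X \<in> A with G X = 1 equals \<Sum>_{d | g} \<mu>(d) #{X \<in> A. d | G X}.  For d | g the sets X \<in> A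
  with d | G X are exactly {l1, l2} \<union> Y where Y ranges over the subsets of the
  floor(m1/d) + floor(m2/d) - (l1+l2)/d multiples of d in (l1,m1] \<union> (l2,m2]; counting all
  such Y gives (a), counting those with |Y| = k - 2 gives (b).
*)

text \<open>A nonempty finite set has as many subsets of even as of odd size.\<close>
lemma sum_Pow_alternating:
  assumes "finite P" "P \<noteq> {}"
  shows "(\<Sum>S\<in>Pow P. (-1::int) ^ card S) = 0"
proof (rule sum_alternating_cancels)
  show "card {S \<in> Pow P. even (card S)} = card {S \<in> Pow P. odd (card S)}"
    using card_subsupersets_even_odd[of P "{}"] assms by (auto simp: Pow_def)
qed (use assms in simp)

lemma prod_primes_facts:
  fixes S :: "nat set"
  assumes "finite S" "\<And>p. p \<in> S \<Longrightarrow> prime p"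
  shows "prime_factors (\<Prod>S) = S" and "squarefree (\<Prod>S)"
proof -
  have nonzero: "0 \<notin> id ` S" using assms by (metis id_apply image_iff not_prime_0)
  show "prime_factors (\<Prod>S) = S"
    using prime_factors_prod[OF assms(1) nonzero] assms(2) by (auto simp: prime_prime_factors)
  show "squarefree (\<Prod>S)"
    using squarefree_prod_coprime[of S id] assms by (simp add: primes_coprime squarefree_prime)
qed

lemma moebius_prod_primes:
  fixes S :: "nat set"
  assumes "finite S" "\<And>p. p \<in> S \<Longrightarrow> prime p"
  shows "moebius (\<Prod>S) = (-1) ^ card S"
  using prod_primes_facts[OF assms] by (simp add: moebius_def)

lemma squarefree_prod_prime_factors:
  fixes d :: nat
  assumes "squarefree d"
  shows "\<Prod>(prime_factors d) = d"
proof -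
  have d0: "d \<noteq> 0" using assms by (metis not_squarefree_0)
  have "\<Prod>(prime_factors d) = (\<Prod>p \<in> prime_factors d. p ^ multiplicity p d)"
    using assms d0 by (intro prod.cong) (auto simp: squarefree_factorial_semiring')
  also have "\<dots> = d" using prod_prime_factors[OF d0] by simp
  finally show ?thesis .
qed

lemma bij_squarefree_divisors:
  fixes g :: nat
  assumes "g > 0"
  shows "bij_betw Prod (Pow (prime_factors g)) {d. d dvd g \<and> squarefree d}"
proof (rule bij_betw_byWitness[where f' = prime_factors])
  let ?P = "prime_factors g"
  show "\<forall>S\<in>Pow ?P. prime_factors (\<Prod>S) = S"
    by (auto intro!: prod_primes_facts(1) intro: finite_subset)
  show "\<forall>d\<in>{d. d dvd g \<and> squarefree d}. \<Prod>(prime_factors d) = d"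
    by (auto intro: squarefree_prod_prime_factors)
  show "prime_factors ` {d. d dvd g \<and> squarefree d} \<subseteq> Pow ?P"
    using assms dvd_prime_factors[of g] by blast
  show "Prod ` Pow ?P \<subseteq> {d. d dvd g \<and> squarefree d}"
  proof safe
    fix S assume S: "S \<subseteq> ?P"
    then have "finite S" "\<And>p. p \<in> S \<Longrightarrow> prime p" by (auto intro: finite_subset)
    then show "squarefree (\<Prod>S)" by (rule prod_primes_facts(2))
    have "\<Prod>S dvd \<Prod>?P" using S by (intro prod_dvd_prod_subset) auto
    also have "\<Prod>?P dvd (\<Prod>p \<in> ?P. p ^ multiplicity p g)"
      by (intro prod_dvd_prod) (auto simp: prime_factors_multiplicity intro!: dvd_power)
    also have "\<dots> = g" using prod_prime_factors[of g] assms by simp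
    finally show "\<Prod>S dvd g" .
  qed
qed

lemma sum_moebius_divisors:
  fixes g :: nat
  assumes "g > 0"
  shows "(\<Sum>d | d dvd g. moebius d) = (if g = 1 then 1 else 0)"
proof -
  let ?P = "prime_factors g"
  have "(\<Sum>d | d dvd g. moebius d) = (\<Sum>d | d dvd g \<and> squarefree d. moebius d)"
    using assms by (intro sum.mono_neutral_right) (auto simp: moebius_def)
  also have "\<dots> = (\<Sum>S\<in>Pow ?P. moebius (\<Prod>S))"
    by (rule sum.reindex_bij_betw[OF bij_squarefree_divisors[OF assms], symmetric])
  also have "\<dots> = (\<Sum>S\<in>Pow ?P. (-1) ^ card S)"
    by (intro sum.cong refl moebius_prod_primes) (auto intro: finite_subset)
  also have "\<dots> = (if g = 1 then 1 else 0)"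
  proof (cases "g = 1")
    case False
    then obtain p where "prime p" "p dvd g" using prime_factor_nat[of g] by blast
    then have "?P \<noteq> {}" using assms by (auto simp: prime_factors_dvd)
    then show ?thesis using sum_Pow_alternating[of ?P] False by simp
  qed simp
  finally show ?thesis .
qed

lemma card_gcd_one_moebius:
  fixes G :: "'a \<Rightarrow> nat"
  assumes fin: "finite A" and g: "g > 0" and dvd_g: "\<And>X. X \<in> A \<Longrightarrow> G X dvd g"
  shows "int (card {X\<in>A. G X = 1}) = (\<Sum>d | d dvd g. moebius d * int (card {X\<in>A. d dvd G X}))"
proof -
  let ?D = "{d. d dvd g}"
  have finD: "finite ?D" using g by simp
  have inner: "(if G X = 1 then 1 else 0) = (\<Sum>d\<in>?D. if d dvd G X then moebius d else 0)"
    if X: "X \<in> A" for X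
  proof -
    have pos: "G X > 0" using dvd_g[OF X] g by (auto intro: Nat.gr0I)
    have "(\<Sum>d\<in>?D. if d dvd G X then moebius d else 0) = (\<Sum>d \<in> {d \<in> ?D. d dvd G X}. moebius d)"
      by (rule sum.inter_filter[OF finD, symmetric])
    also have "{d \<in> ?D. d dvd G X} = {d. d dvd G X}" using dvd_g[OF X] by (auto intro: dvd_trans)
    finally show ?thesis using sum_moebius_divisors[OF pos] by simp
  qed
  have "int (card {X\<in>A. G X = 1}) = (\<Sum>X\<in>A. if G X = 1 then 1 else 0)"
    using fin by (simp add: sum.If_cases Int_def)
  also have "\<dots> = (\<Sum>X\<in>A. \<Sum>d\<in>?D. if d dvd G X then moebius d else 0)"
    by (intro sum.cong refl inner)
  also have "\<dots> = (\<Sum>d\<in>?D. \<Sum>X\<in>A. if d dvd G X then moebius d else 0)"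
    by (rule sum.swap)
  also have "\<dots> = (\<Sum>d\<in>?D. moebius d * int (card {X\<in>A. d dvd G X}))"
    using fin by (intro sum.cong refl) (simp add: sum.If_cases Int_def)
  finally show ?thesis .
qed

lemma card_multiples_interval:
  fixes a b d :: nat
  assumes "d > 0" "d dvd a"
  shows "card {x\<in>{a<..b}. d dvd x} = b div d - a div d"
proof -
  obtain a' where a: "a = d * a'" using assms by auto
  have "{x\<in>{a<..b}. d dvd x} = (\<lambda>j. d * j) ` {a'<..b div d}"
  proof safe
    fix x assume x: "x \<in> {a<..b}" "d dvd x"
    then obtain j where j: "x = d * j" by auto
    then have "a' < j" "j \<le> b div d" using x a assms by (auto simp: less_eq_div_iff_mult_less_eq mult.commute)
    then show "x \<in> (\<lambda>j. d * j) ` {a'<..b div d}" using j by auto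
  next
    fix j assume "j \<in> {a'<..b div d}"
    then show "d * j \<in> {a<..b}" using a assms
      by (auto simp: less_eq_div_iff_mult_less_eq mult.commute)
  qed auto
  moreover have "inj_on (\<lambda>j. d * j) {a'<..b div d}" using assms by (auto simp: inj_on_def)
  ultimately show ?thesis using a assms by (simp add: card_image)
qed

lemma card_sets_between:
  assumes "finite F" "finite B" "F \<inter> B = {}"
  shows "card {X. F \<subseteq> X \<and> X \<subseteq> F \<union> B \<and> Q (card X)} = card {Y. Y \<subseteq> B \<and> Q (card Y + card F)}"
proof -
  have card_Un: "card (Y \<union> F) = card Y + card F" if "Y \<subseteq> B" for Y
    using that assms by (intro card_Un_disjoint) (auto intro: finite_subset)
  have "bij_betw (\<lambda>Y. Y \<union> F) {Y. Y \<subseteq> B \<and> Q (card Y + card F)}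
          {X. F \<subseteq> X \<and> X \<subseteq> F \<union> B \<and> Q (card X)}"
  proof (rule bij_betw_byWitness[where f' = "\<lambda>X. X - F"])
    show "(\<lambda>X. X - F) ` {X. F \<subseteq> X \<and> X \<subseteq> F \<union> B \<and> Q (card X)} \<subseteq> {Y. Y \<subseteq> B \<and> Q (card Y + card F)}"
    proof clarify
      fix X assume X: "F \<subseteq> X" "X \<subseteq> F \<union> B" "Q (card X)"
      then have "X = (X - F) \<union> F" "X - F \<subseteq> B" by auto
      then show "X - F \<subseteq> B \<and> Q (card (X - F) + card F)" using X card_Un by metis
    qed
  qed (use assms card_Un in auto)
  then show ?thesis by (simp add: bij_betw_same_card)
qed

definition anchored_sets :: "nat \<Rightarrow> nat \<Rightarrow> nat \<Rightarrow> nat \<Rightarrow> nat set set" where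
  "anchored_sets l1 m1 l2 m2 = {X. X \<subseteq> {l1..m1} \<union> {l2..m2} \<and> l1 \<in> X \<and> l2 \<in> X}"

definition free_multiples :: "nat \<Rightarrow> nat \<Rightarrow> nat \<Rightarrow> nat \<Rightarrow> nat \<Rightarrow> nat set" where
  "free_multiples d l1 m1 l2 m2 = {x\<in>{l1<..m1}. d dvd x} \<union> {x\<in>{l2<..m2}. d dvd x}"

text \<open>The two intervals are disjoint, so the free multiples are counted interval by interval.\<close>
lemma card_free_multiples:
  assumes "l1 \<le> m1" "m1 < l2" "d > 0" "d dvd l1" "d dvd l2"
  shows "card (free_multiples d l1 m1 l2 m2) = m1 div d - l1 div d + (m2 div d - l2 div d)"
proof -
  have "card (free_multiples d l1 m1 l2 m2)
      = card {x\<in>{l1<..m1}. d dvd x} + card {x\<in>{l2<..m2}. d dvd x}"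
    unfolding free_multiples_def using assms by (intro card_Un_disjoint) auto
  then show ?thesis using card_multiples_interval assms by simp
qed

lemma anchored_sets_divisible:
  assumes "l1 \<le> m1" "m1 < l2" "l2 \<le> m2" "d dvd l1" "d dvd l2" "d dvd n"
  shows "{X \<in> anchored_sets l1 m1 l2 m2. P X \<and> d dvd Gcd (X \<union> {n})}
       = {X. {l1, l2} \<subseteq> X \<and> X \<subseteq> {l1, l2} \<union> free_multiples d l1 m1 l2 m2 \<and> P X}"
proof (intro set_eqI iffI)
  fix X assume "X \<in> {X \<in> anchored_sets l1 m1 l2 m2. P X \<and> d dvd Gcd (X \<union> {n})}"
  then have X: "X \<subseteq> {l1..m1} \<union> {l2..m2}" "l1 \<in> X" "l2 \<in> X" "P X" "\<forall>x\<in>X. d dvd x"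
    by (auto simp: anchored_sets_def dvd_Gcd_iff)
  have "X \<subseteq> {l1, l2} \<union> free_multiples d l1 m1 l2 m2"
  proof
    fix x assume "x \<in> X"
    then show "x \<in> {l1, l2} \<union> free_multiples d l1 m1 l2 m2"
      using X by (auto simp: free_multiples_def)
  qed
  then show "X \<in> {X. {l1, l2} \<subseteq> X \<and> X \<subseteq> {l1, l2} \<union> free_multiples d l1 m1 l2 m2 \<and> P X}"
    using X by simp
next
  fix X assume "X \<in> {X. {l1, l2} \<subseteq> X \<and> X \<subseteq> {l1, l2} \<union> free_multiples d l1 m1 l2 m2 \<and> P X}"
  then have X: "l1 \<in> X" "l2 \<in> X" "X \<subseteq> {l1, l2} \<union> free_multiples d l1 m1 l2 m2" "P X"
    by auto
  have "X \<subseteq> {l1..m1} \<union> {l2..m2}" "\<forall>x\<in>X \<union> {n}. d dvd x"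
    using X(3) assms by (auto simp: free_multiples_def)
  then show "X \<in> {X \<in> anchored_sets l1 m1 l2 m2. P X \<and> d dvd Gcd (X \<union> {n})}"
    using X by (simp add: anchored_sets_def dvd_Gcd_iff)
qed

text \<open>The common form of (a) and (b): the number of sets in Psi_sets whose size satisfies Q.\<close>
lemma card_Psi_sets_moebius:
  assumes "0 < l1" "l1 \<le> m1" "m1 < l2" "l2 \<le> m2" "0 < n"
  shows "int (card {X \<in> Psi_sets l1 m1 l2 m2 n. Q (card X)})
       = (\<Sum>d | d dvd gcd l1 (gcd l2 n). moebius d *
            int (card {Y. Y \<subseteq> free_multiples d l1 m1 l2 m2 \<and> Q (card Y + 2)}))"
proof -
  let ?A = "{X \<in> anchored_sets l1 m1 l2 m2. Q (card X)}"
  let ?g = "gcd l1 (gcd l2 n)"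
  have fin: "finite ?A"
    by (rule finite_subset[of _ "Pow ({l1..m1} \<union> {l2..m2})"]) (auto simp: anchored_sets_def)
  have g: "?g > 0" using assms by simp
  have dvd_g: "Gcd (X \<union> {n}) dvd ?g" if "X \<in> ?A" for X
  proof -
    have "l1 \<in> X \<union> {n}" "l2 \<in> X \<union> {n}" "n \<in> X \<union> {n}"
      using that by (auto simp: anchored_sets_def)
    then show ?thesis by (intro gcd_greatest Gcd_dvd)
  qed
  have "int (card {X\<in>?A. Gcd (X \<union> {n}) = 1})
      = (\<Sum>d | d dvd ?g. moebius d * int (card {X\<in>?A. d dvd Gcd (X \<union> {n})}))"
    by (rule card_gcd_one_moebius[OF fin g dvd_g])
  also have "\<dots> = (\<Sum>d | d dvd ?g. moebius d *
            int (card {Y. Y \<subseteq> free_multiples d l1 m1 l2 m2 \<and> Q (card Y + 2)}))"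
  proof (intro sum.cong refl)
    fix d assume "d \<in> {d. d dvd ?g}"
    then have d: "d dvd l1" "d dvd l2" "d dvd n" by (auto intro: dvd_trans)
    have "{X\<in>?A. d dvd Gcd (X \<union> {n})} = {X \<in> anchored_sets l1 m1 l2 m2. Q (card X) \<and> d dvd Gcd (X \<union> {n})}"
      by auto
    also have "\<dots> = {X. {l1, l2} \<subseteq> X \<and> X \<subseteq> {l1, l2} \<union> free_multiples d l1 m1 l2 m2 \<and> Q (card X)}"
      using anchored_sets_divisible[OF assms(2-4) d] .
    finally have "card {X\<in>?A. d dvd Gcd (X \<union> {n})}
        = card {Y. Y \<subseteq> free_multiples d l1 m1 l2 m2 \<and> Q (card Y + 2)}"
      using card_sets_between[of "{l1, l2}" "free_multiples d l1 m1 l2 m2" Q] assms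
      by (simp add: free_multiples_def)
    then show "moebius d * int (card {X\<in>?A. d dvd Gcd (X \<union> {n})})
        = moebius d * int (card {Y. Y \<subseteq> free_multiples d l1 m1 l2 m2 \<and> Q (card Y + 2)})"
      by simp
  qed
  moreover have "{X\<in>?A. Gcd (X \<union> {n}) = 1} = {X \<in> Psi_sets l1 m1 l2 m2 n. Q (card X)}"
    by (auto simp: Psi_sets_def anchored_sets_def)
  ultimately show ?thesis by simp
qed

lemma Psi_moebius:
  assumes "0 < l1" "l1 \<le> m1" "m1 < l2" "l2 \<le> m2" "0 < n"
  shows "int (Psi l1 m1 l2 m2 n)
       = (\<Sum>d | d dvd gcd l1 (gcd l2 n). moebius d * 2 ^ card (free_multiples d l1 m1 l2 m2))"
proof -
  have "card {Y. Y \<subseteq> free_multiples d l1 m1 l2 m2} = 2 ^ card (free_multiples d l1 m1 l2 m2)" for d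
    using card_Pow[of "free_multiples d l1 m1 l2 m2"] by (simp add: Pow_def free_multiples_def)
  then show ?thesis
    using card_Psi_sets_moebius[OF assms, of "\<lambda>_. True"] by (simp add: Psi_def)
qed

lemma Psi_k_moebius:
  assumes "0 < l1" "l1 \<le> m1" "m1 < l2" "l2 \<le> m2" "0 < n" "2 \<le> k"
  shows "int (Psi_k k l1 m1 l2 m2 n)
       = (\<Sum>d | d dvd gcd l1 (gcd l2 n).
            moebius d * int (card (free_multiples d l1 m1 l2 m2) choose (k - 2)))"
proof -
  have size_k: "card {Y. Y \<subseteq> free_multiples d l1 m1 l2 m2 \<and> card Y + 2 = k}
      = card (free_multiples d l1 m1 l2 m2) choose (k - 2)" for d
  proof -
    have "{Y. Y \<subseteq> free_multiples d l1 m1 l2 m2 \<and> card Y + 2 = k}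
        = {Y. Y \<subseteq> free_multiples d l1 m1 l2 m2 \<and> card Y = k - 2}"
      using assms(6) by auto
    then show ?thesis using n_subsets[of "free_multiples d l1 m1 l2 m2"]
      by (simp add: free_multiples_def)
  qed
  show ?thesis
    using card_Psi_sets_moebius[OF assms(1-5), of "\<lambda>c. c = k"]
    unfolding Psi_k_def size_k by simp
qed

lemma exponent_eq_card_free_multiples:
  fixes l1 m1 l2 m2 d :: nat
  assumes "l1 \<le> m1" "m1 < l2" "l2 \<le> m2" "d > 0" "d dvd l1" "d dvd l2"
  shows "nat (\<lfloor>real m1 / real d\<rfloor> + \<lfloor>real m2 / real d\<rfloor> - (int l1 + int l2) div int d)
       = card (free_multiples d l1 m1 l2 m2)"
proof -
  have "\<lfloor>real m1 / real d\<rfloor> = int (m1 div d)" "\<lfloor>real m2 / real d\<rfloor> = int (m2 div d)"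
    by (simp_all add: floor_divide_of_nat_eq)
  moreover have "(int l1 + int l2) div int d = int (l1 div d + l2 div d)"
    using assms by (simp add: zdiv_int[symmetric])
  moreover have "l1 div d \<le> m1 div d" "l2 div d \<le> m2 div d" using assms by (auto intro: div_le_mono)
  ultimately show ?thesis using card_free_multiples[OF assms(1,2,4-6)] by simp
qed

theorem lemma1:
  fixes l1 m1 l2 m2 n k :: nat
  assumes "0 < l1" "l1 \<le> m1" "m1 < l2" "l2 \<le> m2" "0 < n" "2 \<le> k"
  shows "int (Psi l1 m1 l2 m2 n) =
           (\<Sum>d | d dvd gcd l1 (gcd l2 n).
              moebius d * 2 ^ (nat (\<lfloor>real m1 / real d\<rfloor> + \<lfloor>real m2 / real d\<rfloor>
                                    - (int l1 + int l2) div int d)))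
       \<and> int (Psi_k k l1 m1 l2 m2 n) =
           (\<Sum>d | d dvd gcd l1 (gcd l2 n).
              moebius d * int ((nat (\<lfloor>real m1 / real d\<rfloor> + \<lfloor>real m2 / real d\<rfloor>
                                    - (int l1 + int l2) div int d)) choose (k - 2)))"
proof -
  let ?g = "gcd l1 (gcd l2 n)"
  define E where "E = (\<lambda>d::nat. nat (\<lfloor>real m1 / real d\<rfloor> + \<lfloor>real m2 / real d\<rfloor>
                                    - (int l1 + int l2) div int d))"
  have exponent: "card (free_multiples d l1 m1 l2 m2) = E d" if "d \<in> {d. d dvd ?g}" for d
    unfolding E_def using that assms
    by (intro exponent_eq_card_free_multiples[symmetric]) (auto intro: dvd_trans Nat.gr0I)
  have "int (Psi l1 m1 l2 m2 n) = (\<Sum>d | d dvd ?g. moebius d * 2 ^ E d)"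
    unfolding Psi_moebius[OF assms(1-5)] by (intro sum.cong refl) (simp only: exponent)
  moreover have "int (Psi_k k l1 m1 l2 m2 n) = (\<Sum>d | d dvd ?g. moebius d * int (E d choose (k - 2)))"
    unfolding Psi_k_moebius[OF assms] by (intro sum.cong refl) (simp only: exponent)
  ultimately show ?thesis unfolding E_def by blast
qed

end
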